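(* Let $f_1,\dots,f_N$ be compactly supported distributions on $\mathbb{R}$ and let $a_1,\dots,a_N$ be distinct real numbers such that \[ \sum_{j=1}^N\widehat f_j(\lambda)e^{a_j\lambda}=0\qquad\text{for all }\lambda\in\mathbb{R}. \] Then $f_1=\dots=f_N=0$.
   Context: $\widehat f_j$ denotes the Fourier transform of $f_j$ (an entire function of polynomial growth on $\mathbb{R}$, by Paley–Wiener–Schwartz). *)

theory Defs
  imports "HOL-Analysis.Analysis"
begin

fun nderiv :: "nat \<Rightarrow> (real \<Rightarrow> complex) \<Rightarrow> real \<Rightarrow> complex" where
  "nderiv 0 \<phi> = \<phi>"
| "nderiv (Suc k) \<phi> = (\<lambda>x. vector_derivative (nderiv k \<phi>) (at x))"

definition smooth :: "(real \<Rightarrow> complex) \<Rightarrow> bool" where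
  "smooth \<phi> \<longleftrightarrow> (\<forall>k x. (nderiv k \<phi> has_vector_derivative nderiv (Suc k) \<phi> x) (at x))"

text \<open>Compactly supported distributions on the real line, i.e. the dual space E'(R) of
  C-infinity(R): linear functionals on smooth functions which are continuous for the
  Frechet topology, i.e. bounded by finitely many seminorms
  sup over [-K,K] of the derivatives up to order m.\<close>
definition cs_distribution :: "((real \<Rightarrow> complex) \<Rightarrow> complex) \<Rightarrow> bool" where
  "cs_distribution T \<longleftrightarrow>
     (\<forall>\<phi> \<psi>. smooth \<phi> \<longrightarrow> smooth \<psi> \<longrightarrow> T (\<lambda>x. \<phi> x + \<psi> x) = T \<phi> + T \<psi>) \<and>
     (\<forall>\<phi> c. smooth \<phi> \<longrightarrow> T (\<lambda>x. c * \<phi> x) = c * T \<phi>) \<and>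
     (\<exists>C K m. \<forall>\<phi>. smooth \<phi> \<longrightarrow>
        norm (T \<phi>) \<le> C * (\<Sum>k\<le>m. (SUP x\<in>{-K..K}. norm (nderiv k \<phi> x))))"

definition fourier_dist :: "((real \<Rightarrow> complex) \<Rightarrow> complex) \<Rightarrow> real \<Rightarrow> complex" where
  "fourier_dist T t = T (\<lambda>x. exp (- \<i> * complex_of_real (t * x)))"

definition zero_dist :: "((real \<Rightarrow> complex) \<Rightarrow> complex) \<Rightarrow> bool" where
  "zero_dist T \<longleftrightarrow> (\<forall>\<phi>. smooth \<phi> \<longrightarrow> T \<phi> = 0)"

end

theory Submission
  imports Defs "HOL-Complex_Analysis.Complex_Analysis"
begin

text \<open>The moments \<open>T ((\<beta> - \<i> x)^n)\<close> of a compactly supported distribution \<open>T\<close> are, up to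
  factorials, the Taylor coefficients at \<open>0\<close> of \<open>t \<mapsto> T (exp (t (\<beta> - \<i> x)))\<close> and the
  coefficients at infinity of the Cauchy transform \<open>w \<mapsto> T (1 / (w + \<i> x))\<close>. As
  \<open>T (exp (t (a - \<i> x)))\<close> is \<open>e^(a t)\<close> times the Fourier transform of \<open>T\<close> at \<open>t\<close>, the hypothesis
  says that the moments of the \<open>f j\<close> at the points \<open>a j\<close> sum to zero, hence so do their Cauchy
  transforms shifted by \<open>a j\<close>, for large \<open>|w|\<close>. For the largest exponent this expresses the
  Cauchy transform of its distribution, far out, by a function holomorphic on a half plane
  \<open>Re w > -\<delta>\<close>. The transform is holomorphic and bounded away from the imaginary axis, so the
  two glue to a bounded entire function, which by Liouville's theorem is constant, equal to
  the limit \<open>0\<close> along the positive reals. Hence all moments of that distribution vanish, and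
  since polynomials are dense in \<open>C^m\<close> on compact sets, it is zero. Induction on the number of
  distributions finishes the proof.\<close>

section \<open>Smooth functions\<close>

lemma nderiv_eqI:
  assumes "\<psi> 0 = \<phi>" "\<And>k x. (\<psi> k has_vector_derivative \<psi> (Suc k) x) (at x)"
  shows "nderiv k \<phi> = \<psi> k"
proof (induction k)
  case 0 then show ?case using assms(1) by simp
next
  case (Suc k)
  show ?case using Suc assms(2) by (auto intro!: ext vector_derivative_at)
qed

lemma smoothI:
  assumes "\<psi> 0 = \<phi>" "\<And>k x. (\<psi> k has_vector_derivative \<psi> (Suc k) x) (at x)"
  shows "smooth \<phi>"
  unfolding smooth_def using nderiv_eqI[OF assms] assms(2) by simp

lemma smoothD: "smooth \<phi> \<Longrightarrow> (nderiv k \<phi> has_vector_derivative nderiv (Suc k) \<phi> x) (at x)"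
  unfolding smooth_def by blast

lemma continuous_on_nderiv: "smooth \<phi> \<Longrightarrow> continuous_on S (nderiv k \<phi>)"
  by (meson continuous_at_imp_continuous_on has_vector_derivative_continuous smoothD)

lemma nderiv_Suc_shift: "nderiv (Suc k) f = nderiv k (nderiv 1 f)"
  by (induction k) simp_all

lemma
  assumes "smooth \<phi>" "smooth \<psi>"
  shows smooth_lincomb: "smooth (\<lambda>x. a * \<phi> x + b * \<psi> x)"
    and nderiv_lincomb: "nderiv k (\<lambda>x. a * \<phi> x + b * \<psi> x) = (\<lambda>x. a * nderiv k \<phi> x + b * nderiv k \<psi> x)"
proof -
  define F where "F = (\<lambda>k x. a * nderiv k \<phi> x + b * nderiv k \<psi> x)"
  have F0: "F 0 = (\<lambda>x. a * \<phi> x + b * \<psi> x)" by (simp add: F_def)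
  have FD: "(F k has_vector_derivative F (Suc k) x) (at x)" for k x
    unfolding F_def
    by (intro has_vector_derivative_add has_vector_derivative_mult_right smoothD assms)
  show "smooth (\<lambda>x. a * \<phi> x + b * \<psi> x)" using smoothI[OF F0 FD] .
  show "nderiv k (\<lambda>x. a * \<phi> x + b * \<psi> x) = (\<lambda>x. a * nderiv k \<phi> x + b * nderiv k \<psi> x)"
    using nderiv_eqI[OF F0 FD] by (simp add: F_def)
qed

lemma smooth_scaled: "smooth \<phi> \<Longrightarrow> smooth (\<lambda>x. c * \<phi> x)"
  using smooth_lincomb[of \<phi> \<phi> c 0] by simp

lemma nderiv_scaled: "smooth \<phi> \<Longrightarrow> nderiv k (\<lambda>x. c * \<phi> x) = (\<lambda>x. c * nderiv k \<phi> x)"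
  using nderiv_lincomb[where a = c and b = 0, of \<phi> \<phi>] by simp

lemma smooth_zero: "smooth (\<lambda>x. 0)"
  using smoothI[of "\<lambda>k x. 0"] by auto

text \<open>The test functions used below are holomorphic functions restricted to the vertical
  line \<open>x \<mapsto> \<beta> - \<i> x\<close>, so that \<open>exp (t * vline 0 x)\<close> is the Fourier kernel.\<close>

abbreviation vline :: "complex \<Rightarrow> real \<Rightarrow> complex" where
  "vline \<beta> x \<equiv> \<beta> - \<i> * complex_of_real x"

lemma
  assumes "\<And>x. vline \<beta> x \<in> U" "\<And>k z. z \<in> U \<Longrightarrow> (g k has_field_derivative g (Suc k) z) (at z)"
  shows smooth_comp_vline: "smooth (\<lambda>x. g 0 (vline \<beta> x))"
    and nderiv_comp_vline: "nderiv k (\<lambda>x. g 0 (vline \<beta> x)) = (\<lambda>x. (-\<i>)^k * g k (vline \<beta> x))"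
proof -
  define F where "F = (\<lambda>k x. (-\<i>)^k * g k (vline \<beta> x))"
  have F0: "F 0 = (\<lambda>x. g 0 (vline \<beta> x))" by (simp add: F_def)
  have FD: "(F k has_vector_derivative F (Suc k) x) (at x)" for k x
  proof -
    have "((\<lambda>x. vline \<beta> x) has_vector_derivative (-\<i>)) (at x)"
      by (auto intro!: derivative_eq_intros)
    from field_vector_diff_chain_at[OF this assms(2)[OF assms(1)]]
    have "((\<lambda>x. (-\<i>)^k * g k (vline \<beta> x)) has_vector_derivative
            (-\<i>)^k * ((-\<i>) * g (Suc k) (vline \<beta> x))) (at x)"
      by (intro has_vector_derivative_mult_right) (simp add: o_def)
    then show ?thesis by (simp add: F_def mult_ac)
  qed
  show "smooth (\<lambda>x. g 0 (vline \<beta> x))" using smoothI[OF F0 FD] .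
  show "nderiv k (\<lambda>x. g 0 (vline \<beta> x)) = (\<lambda>x. (-\<i>)^k * g k (vline \<beta> x))"
    using nderiv_eqI[OF F0 FD] by (simp add: F_def)
qed

lemma norm_vline_le: "norm (vline \<beta> x) \<le> norm \<beta> + \<bar>x\<bar>"
  using norm_triangle_ineq4[of \<beta> "\<i> * complex_of_real x"] by (simp add: norm_mult)

lemma norm_vline_le_interval:
  assumes "x \<in> {-K..K}"
  shows "norm (vline \<beta> x) \<le> norm \<beta> + K"
proof -
  have "\<bar>x\<bar> \<le> K" using assms by auto
  then show ?thesis using norm_vline_le[of \<beta> x] by linarith
qed

section \<open>Compactly supported distributions\<close>

definition seminorm_bound :: "((real \<Rightarrow> complex) \<Rightarrow> complex) \<Rightarrow> real \<Rightarrow> real \<Rightarrow> nat \<Rightarrow> bool" where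
  "seminorm_bound T C K m \<longleftrightarrow> C \<ge> 0 \<and> K \<ge> 0 \<and> (\<forall>\<phi> \<epsilon>. smooth \<phi> \<longrightarrow>
      (\<forall>k\<le>m. \<forall>x\<in>{-K..K}. norm (nderiv k \<phi> x) \<le> \<epsilon>) \<longrightarrow> norm (T \<phi>) \<le> C * \<epsilon>)"

lemma seminorm_boundD:
  "seminorm_bound T C K m \<Longrightarrow> smooth \<phi> \<Longrightarrow>
    (\<And>k x. k \<le> m \<Longrightarrow> x \<in> {-K..K} \<Longrightarrow> norm (nderiv k \<phi> x) \<le> \<epsilon>) \<Longrightarrow> norm (T \<phi>) \<le> C * \<epsilon>"
  unfolding seminorm_bound_def by blast

lemma seminorm_bound_nonneg: "seminorm_bound T C K m \<Longrightarrow> C \<ge> 0 \<and> K \<ge> 0"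
  unfolding seminorm_bound_def by blast

lemma cs_distribution_lincomb:
  assumes "cs_distribution T" "smooth \<phi>" "smooth \<psi>"
  shows "T (\<lambda>x. a * \<phi> x + b * \<psi> x) = a * T \<phi> + b * T \<psi>"
  using assms smooth_scaled unfolding cs_distribution_def by simp

lemma cs_distribution_scaled:
  "cs_distribution T \<Longrightarrow> smooth \<phi> \<Longrightarrow> T (\<lambda>x. c * \<phi> x) = c * T \<phi>"
  unfolding cs_distribution_def by blast

lemma cs_distribution_zero: "cs_distribution T \<Longrightarrow> T (\<lambda>x. 0) = 0"
  using cs_distribution_scaled[OF _ smooth_zero, of T 0] by simp

lemma cs_distribution_bounded_imp_zero:
  assumes T: "cs_distribution T" and bounded: "\<And>\<psi>. smooth \<psi> \<Longrightarrow> norm (T \<psi>) \<le> M"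
    and sm: "smooth \<phi>"
  shows "T \<phi> = 0"
proof (rule ccontr)
  assume ne: "T \<phi> \<noteq> 0"
  define c where "c = complex_of_real ((\<bar>M\<bar> + 1) / norm (T \<phi>))"
  have "norm (c * T \<phi>) \<le> M"
    using bounded[OF smooth_scaled[OF sm]] cs_distribution_scaled[OF T sm] by simp
  moreover have "norm (c * T \<phi>) = \<bar>M\<bar> + 1"
    unfolding c_def norm_mult norm_of_real using ne by simp
  ultimately show False by linarith
qed

lemma cs_distribution_seminorm_bound:
  assumes "cs_distribution T"
  shows "\<exists>C K m. seminorm_bound T C K m"
proof -
  obtain C0 K0 m where B: "\<And>\<phi>. smooth \<phi> \<Longrightarrow>
        norm (T \<phi>) \<le> C0 * (\<Sum>k\<le>m. (SUP x\<in>{-K0..K0}. norm (nderiv k \<phi> x)))"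
    using assms unfolding cs_distribution_def by blast
  show ?thesis
  proof (cases "K0 < 0")
    case True
    text \<open>The supremum over the empty set is a junk constant, so \<open>T\<close> is bounded, hence zero.\<close>
    have "norm (T \<phi>) \<le> C0 * (\<Sum>k\<le>m. Sup ({}::real set))" if "smooth \<phi>" for \<phi>
      using B[OF that] True by simp
    then have "T \<phi> = 0" if "smooth \<phi>" for \<phi>
      using cs_distribution_bounded_imp_zero[OF assms _ that] by blast
    then have "seminorm_bound T 0 0 0" unfolding seminorm_bound_def by simp
    then show ?thesis by blast
  next
    case False
    have "seminorm_bound T (max C0 0 * (m+1)) K0 m"
      unfolding seminorm_bound_def
    proof (intro conjI allI impI)
      fix \<phi> \<epsilon> assume sm: "smooth \<phi>" and h: "\<forall>k\<le>m. \<forall>x\<in>{-K0..K0}. norm (nderiv k \<phi> x) \<le> \<epsilon>"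
      define S where "S k = (SUP x\<in>{-K0..K0}. norm (nderiv k \<phi> x))" for k
      have ne: "{-K0..K0} \<noteq> {}" using False by simp
      have "bdd_above ((\<lambda>x. norm (nderiv k \<phi> x)) ` {-K0..K0})" for k
        by (intro bounded_imp_bdd_above compact_imp_bounded compact_continuous_image
            continuous_on_norm continuous_on_nderiv sm compact_Icc)
      then have S_nonneg: "S k \<ge> 0" for k
        unfolding S_def using ne by (meson all_not_in_conv cSUP_upper2 norm_ge_zero)
      have S_le: "S k \<le> \<epsilon>" if "k \<le> m" for k
        unfolding S_def using h that ne by (intro cSUP_least) auto
      have "norm (T \<phi>) \<le> C0 * (\<Sum>k\<le>m. S k)" using B[OF sm] by (simp add: S_def)
      also have "\<dots> \<le> max C0 0 * (\<Sum>k\<le>m. S k)"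
        using S_nonneg by (intro mult_right_mono sum_nonneg) auto
      also have "\<dots> \<le> max C0 0 * ((m+1) * \<epsilon>)"
        using sum_mono[of "{..m}" S "\<lambda>_. \<epsilon>"] S_le by (intro mult_left_mono) auto
      finally show "norm (T \<phi>) \<le> max C0 0 * (m+1) * \<epsilon>" by (simp add: mult.assoc)
    qed (use False in auto)
    then show ?thesis by blast
  qed
qed

lemma seminorm_bound_mono:
  assumes "seminorm_bound T C K m" "C \<le> C'" "K \<le> K'" "m \<le> m'"
  shows "seminorm_bound T C' K' m'"
  unfolding seminorm_bound_def
proof (intro conjI allI impI)
  have B: "C \<ge> 0" "K \<ge> 0" using seminorm_bound_nonneg[OF assms(1)] by auto
  then show "C' \<ge> 0" "K' \<ge> 0" using assms by auto
  fix \<phi> \<epsilon> assume sm: "smooth \<phi>" and h: "\<forall>k\<le>m'. \<forall>x\<in>{-K'..K'}. norm (nderiv k \<phi> x) \<le> \<epsilon>"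
  have "\<epsilon> \<ge> 0" using h[rule_format, of 0 0] B assms
    by (meson norm_ge_zero order_trans le0 atLeastAtMost_iff neg_le_0_iff_le)
  have "norm (T \<phi>) \<le> C * \<epsilon>"
    by (rule seminorm_boundD[OF assms(1) sm]) (use h assms in auto)
  also have "\<dots> \<le> C' * \<epsilon>" using \<open>\<epsilon> \<ge> 0\<close> assms by (intro mult_right_mono) auto
  finally show "norm (T \<phi>) \<le> C' * \<epsilon>" .
qed

lemma seminorm_bound_uniform:
  assumes "finite I" "\<And>j. j \<in> I \<Longrightarrow> \<exists>C K m. seminorm_bound (f j) C K m"
  shows "\<exists>C K m. \<forall>j\<in>I. seminorm_bound (f j) C K m"
  using assms
proof (induction I rule: finite_induct)
  case empty then show ?case by simp
next
  case (insert i I)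
  obtain C K m where "\<forall>j\<in>I. seminorm_bound (f j) C K m" using insert by auto
  moreover obtain C1 K1 m1 where "seminorm_bound (f i) C1 K1 m1" using insert.prems[of i] by auto
  ultimately have "\<forall>j\<in>insert i I. seminorm_bound (f j) (max C C1) (max K K1) (max m m1)"
    by (auto intro: seminorm_bound_mono)
  then show ?case by blast
qed

lemma cs_distribution_tendsto:
  assumes T: "cs_distribution T" and B: "seminorm_bound T C K m" and sm: "smooth \<phi>"
    and smF: "eventually (\<lambda>h. smooth (\<Phi> h)) F"
    and conv: "\<And>\<epsilon>. \<epsilon> > 0 \<Longrightarrow> eventually (\<lambda>h. \<forall>k\<le>m. \<forall>x\<in>{-K..K}.
                 norm (nderiv k (\<Phi> h) x - nderiv k \<phi> x) \<le> \<epsilon>) F"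
  shows "((\<lambda>h. T (\<Phi> h)) \<longlongrightarrow> T \<phi>) F"
proof (rule tendstoI)
  fix e :: real assume e: "e > 0"
  have C0: "C \<ge> 0" using seminorm_bound_nonneg[OF B] by simp
  define \<epsilon> where "\<epsilon> = e / (2 * (C + 1))"
  have \<epsilon>: "\<epsilon> > 0" using e C0 by (simp add: \<epsilon>_def)
  have "C * \<epsilon> < e"
  proof -
    have "C * \<epsilon> \<le> (C+1) * \<epsilon>" using \<epsilon> by simp
    also have "\<dots> = e / 2" using C0 by (simp add: \<epsilon>_def field_simps)
    finally show ?thesis using e by simp
  qed
  show "eventually (\<lambda>h. dist (T (\<Phi> h)) (T \<phi>) < e) F"
    using eventually_conj[OF smF conv[OF \<epsilon>]]
  proof (rule eventually_mono)
    fix h assume H: "smooth (\<Phi> h) \<and> (\<forall>k\<le>m. \<forall>x\<in>{-K..K}. norm (nderiv k (\<Phi> h) x - nderiv k \<phi> x) \<le> \<epsilon>)"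
    then have smh: "smooth (\<Phi> h)" by simp
    have "norm (T (\<lambda>x. 1 * \<Phi> h x + (-1) * \<phi> x)) \<le> C * \<epsilon>"
    proof (rule seminorm_boundD[OF B smooth_lincomb[OF smh sm]])
      fix k x assume "k \<le> m" "x \<in> {-K..K}"
      then show "norm (nderiv k (\<lambda>x. 1 * \<Phi> h x + (-1) * \<phi> x) x) \<le> \<epsilon>"
        unfolding nderiv_lincomb[OF smh sm] using H by simp
    qed
    then show "dist (T (\<Phi> h)) (T \<phi>) < e"
      using cs_distribution_lincomb[OF T smh sm, of 1 "-1"] \<open>C * \<epsilon> < e\<close> by (simp add: dist_norm)
  qed
qed

section \<open>Moments and power series expansions of test functions\<close>

definition partial_powser :: "(nat \<Rightarrow> complex) \<Rightarrow> nat \<Rightarrow> complex \<Rightarrow> complex" where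
  "partial_powser c N z = (\<Sum>n<N. c n * z^n)"

definition moment :: "((real \<Rightarrow> complex) \<Rightarrow> complex) \<Rightarrow> complex \<Rightarrow> nat \<Rightarrow> complex" where
  "moment T \<beta> n = T (\<lambda>x. (vline \<beta> x)^n)"

lemma partial_powser_has_field_derivative:
  "(partial_powser c N has_field_derivative partial_powser (diffs c) (N - 1) z) (at z)"
proof -
  have "(partial_powser c N has_field_derivative (\<Sum>n<N. c n * (of_nat n * z^(n - 1)))) (at z)"
    unfolding partial_powser_def by (auto intro!: derivative_eq_intros sum.cong simp: mult_ac)
  moreover have "(\<Sum>n<N. c n * (of_nat n * z^(n - 1))) = partial_powser (diffs c) (N - 1) z"
  proof (cases N)
    case (Suc M)
    have "(\<Sum>n<Suc M. c n * (of_nat n * z^(n - 1))) = (\<Sum>n<M. c (Suc n) * (of_nat (Suc n) * z^n))"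
      by (subst sum.lessThan_Suc_shift) simp
    then show ?thesis using Suc by (simp add: partial_powser_def diffs_def mult_ac)
  qed (simp add: partial_powser_def)
  ultimately show ?thesis by simp
qed

lemma
  shows smooth_partial_powser_vline: "smooth (\<lambda>x. partial_powser c N (vline \<beta> x))"
    and nderiv_partial_powser_vline: "nderiv k (\<lambda>x. partial_powser c N (vline \<beta> x)) =
          (\<lambda>x. (-\<i>)^k * partial_powser ((diffs^^k) c) (N - k) (vline \<beta> x))"
proof -
  define g where "g = (\<lambda>k. partial_powser ((diffs^^k) c) (N - k))"
  have "(g k has_field_derivative g (Suc k) z) (at z)" for k z
    using partial_powser_has_field_derivative[of "(diffs^^k) c" "N - k" z] by (simp add: g_def)
  from smooth_comp_vline[of \<beta> UNIV g, OF _ this] nderiv_comp_vline[of \<beta> UNIV g, OF _ this]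
  show "smooth (\<lambda>x. partial_powser c N (vline \<beta> x))"
    and "nderiv k (\<lambda>x. partial_powser c N (vline \<beta> x)) =
          (\<lambda>x. (-\<i>)^k * partial_powser ((diffs^^k) c) (N - k) (vline \<beta> x))"
    by (simp_all add: g_def)
qed

lemma smooth_vline_power: "smooth (\<lambda>x. (vline \<beta> x)^n)"
  using smooth_partial_powser_vline[of "\<lambda>i. if i = n then 1 else 0" "Suc n" \<beta>]
  by (simp add: partial_powser_def)

lemma cs_distribution_partial_powser:
  assumes "cs_distribution T"
  shows "T (\<lambda>x. partial_powser c N (vline \<beta> x)) = (\<Sum>n<N. c n * moment T \<beta> n)"
proof (induction N)
  case 0
  then show ?case using cs_distribution_zero[OF assms] by (simp add: partial_powser_def)
next
  case (Suc N)
  have "T (\<lambda>x. 1 * partial_powser c N (vline \<beta> x) + c N * (vline \<beta> x)^N) =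
        1 * T (\<lambda>x. partial_powser c N (vline \<beta> x)) + c N * moment T \<beta> N"
    unfolding moment_def
    by (rule cs_distribution_lincomb[OF assms smooth_partial_powser_vline smooth_vline_power])
  then show ?case using Suc by (simp add: partial_powser_def)
qed

lemma summable_diffs_iterate:
  fixes c :: "nat \<Rightarrow> complex"
  assumes "\<And>z. norm z < r \<Longrightarrow> summable (\<lambda>n. c n * z^n)" "norm z < r"
  shows "summable (\<lambda>n. (diffs^^k) c n * z^n)"
  using assms(2)
proof (induction k arbitrary: z)
  case 0 then show ?case using assms(1) by simp
next
  case (Suc k) then show ?case using termdiff_converges[of z r "(diffs^^k) c"] by simp
qed

lemma partial_powser_diffs_iterate_uniform:
  fixes c :: "nat \<Rightarrow> complex"
  assumes conv: "\<And>z. norm z < r \<Longrightarrow> summable (\<lambda>n. c n * z^n)" and "0 \<le> R" "R < r" "\<epsilon> > 0"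
  shows "\<forall>\<^sub>F N in sequentially. \<forall>z\<in>cball 0 R.
           dist (partial_powser ((diffs^^k) c) N z) (\<Sum>n. (diffs^^k) c n * z^n) < \<epsilon>"
proof -
  define \<rho> where "\<rho> = (R + r) / 2"
  have "0 \<le> \<rho>" "R < \<rho>" "\<rho> < r" using assms by (auto simp: \<rho>_def)
  then have \<rho>: "R < \<rho>" "norm (complex_of_real \<rho>) < r" "norm (complex_of_real \<rho>) = \<rho>"
    by auto
  have "summable (\<lambda>n. (diffs^^k) c n * complex_of_real \<rho> ^ n)"
    using conv \<rho>(2) by (rule summable_diffs_iterate)
  have "ereal R < ereal \<rho>" using \<rho>(1) by simp
  also have "\<dots> \<le> conv_radius ((diffs^^k) c)"
    using conv_radius_geI[OF \<open>summable _\<close>] \<rho>(3) by simp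
  finally have "ereal R < conv_radius ((diffs^^k) c)" .
  then show ?thesis
    using uniform_limitD[OF powser_uniform_limit[of R _ 0] \<open>\<epsilon> > 0\<close>] by (simp add: partial_powser_def)
qed

text \<open>The partial sums converge to \<open>\<phi>\<close> in the \<open>C\<^sup>m\<close> seminorm on \<open>[-K, K]\<close>, so continuity of
  \<open>T\<close> gives the expansion.\<close>

lemma cs_distribution_powser_moments:
  assumes T: "cs_distribution T" and B: "seminorm_bound T C K m" and sm: "smooth \<phi>"
    and R: "\<And>x. x \<in> {-K..K} \<Longrightarrow> norm (vline \<beta> x) \<le> R" and Rr: "R < r"
    and conv: "\<And>z. norm z < r \<Longrightarrow> summable (\<lambda>n. c n * z^n)"
    and D: "\<And>k x. k \<le> m \<Longrightarrow> x \<in> {-K..K} \<Longrightarrow>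
              nderiv k \<phi> x = (-\<i>)^k * (\<Sum>n. (diffs^^k) c n * (vline \<beta> x)^n)"
  shows "(\<lambda>n. c n * moment T \<beta> n) sums T \<phi>"
proof -
  have R0: "0 \<le> R"
    using R[of 0] seminorm_bound_nonneg[OF B] by (auto intro: order_trans[OF norm_ge_zero])
  have "(\<lambda>N. T (\<lambda>x. partial_powser c N (vline \<beta> x))) \<longlonglongrightarrow> T \<phi>"
  proof (rule cs_distribution_tendsto[OF T B sm])
    show "\<forall>\<^sub>F N in sequentially. smooth (\<lambda>x. partial_powser c N (vline \<beta> x))"
      by (simp add: smooth_partial_powser_vline)
    fix \<epsilon> :: real assume "\<epsilon> > 0"
    have "\<forall>\<^sub>F N in sequentially. \<forall>k\<in>{..m}. \<forall>z\<in>cball 0 R.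
        dist (partial_powser ((diffs^^k) c) (N - k) z) (\<Sum>n. (diffs^^k) c n * z^n) < \<epsilon>"
      using eventually_compose_filterlim[OF partial_powser_diffs_iterate_uniform[OF conv R0 Rr \<open>\<epsilon> > 0\<close>]
          filterlim_minus_const_nat_at_top]
      by (intro eventually_ball_finite) auto
    then show "\<forall>\<^sub>F N in sequentially. \<forall>k\<le>m. \<forall>x\<in>{-K..K}.
        norm (nderiv k (\<lambda>x. partial_powser c N (vline \<beta> x)) x - nderiv k \<phi> x) \<le> \<epsilon>"
    proof (rule eventually_mono, intro allI impI ballI)
      fix N k x assume close: "\<forall>k\<in>{..m}. \<forall>z\<in>cball 0 R. dist (partial_powser ((diffs^^k) c) (N - k) z)
          (\<Sum>n. (diffs^^k) c n * z^n) < \<epsilon>" and "k \<le> m" "x \<in> {-K..K}"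
      have "norm (nderiv k (\<lambda>x. partial_powser c N (vline \<beta> x)) x - nderiv k \<phi> x) =
          dist (partial_powser ((diffs^^k) c) (N - k) (vline \<beta> x)) (\<Sum>n. (diffs^^k) c n * (vline \<beta> x)^n)"
        unfolding nderiv_partial_powser_vline D[OF \<open>k \<le> m\<close> \<open>x \<in> {-K..K}\<close>] dist_norm
          right_diff_distrib[symmetric] norm_mult by (simp add: norm_power)
      also have "\<dots> < \<epsilon>" using close \<open>k \<le> m\<close> R[OF \<open>x \<in> {-K..K}\<close>] by simp
      finally show "norm (nderiv k (\<lambda>x. partial_powser c N (vline \<beta> x)) x - nderiv k \<phi> x) \<le> \<epsilon>"
        by simp
    qed
  qed
  then show ?thesis unfolding sums_def by (simp add: cs_distribution_partial_powser[OF T])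
qed

lemma higher_deriv_eq_powser:
  fixes c :: "nat \<Rightarrow> complex"
  assumes conv: "\<And>z. norm z < r \<Longrightarrow> summable (\<lambda>n. c n * z^n)"
    and gD: "\<And>k z. norm z < r \<Longrightarrow> (g k has_field_derivative g (Suc k) z) (at z)"
    and g0: "\<And>z. norm z < r \<Longrightarrow> g 0 z = (\<Sum>n. c n * z^n)"
    and z: "norm z < r"
  shows "g k z = (\<Sum>n. (diffs^^k) c n * z^n)"
  using z
proof (induction k arbitrary: z)
  case 0 then show ?case using g0 by simp
next
  case (Suc k)
  have "DERIV (\<lambda>x. \<Sum>n. (diffs^^k) c n * x^n) z :> g (Suc k) z"
  proof (rule has_field_derivative_transform_within_open[OF gD[OF Suc.prems], of "ball 0 r"])
    show "z \<in> ball 0 r" "open (ball 0 r)" using Suc.prems by auto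
  qed (use Suc.IH in auto)
  moreover have "DERIV (\<lambda>x. \<Sum>n. (diffs^^k) c n * x^n) z :> (\<Sum>n. diffs ((diffs^^k) c) n * z^n)"
    by (rule termdiffs_strong'[OF summable_diffs_iterate[OF conv] Suc.prems])
  ultimately show ?case using DERIV_unique by simp
qed

lemma exp_powser_sums: "(\<lambda>n. (t^n / fact n) * z^n) sums exp (t * (z::complex))"
proof -
  have "(\<lambda>n. (t*z)^n /\<^sub>R fact n) = (\<lambda>n. (t^n / fact n) * z^n)"
    by (rule ext) (simp add: scaleR_conv_of_real power_mult_distrib divide_inverse mult_ac)
  then show ?thesis using exp_converges[of "t * z"] by simp
qed

lemma
  shows smooth_exp_vline: "smooth (\<lambda>x. exp (t * vline \<beta> x))"
    and nderiv_exp_vline: "nderiv k (\<lambda>x. exp (t * vline \<beta> x)) = (\<lambda>x. (-\<i>)^k * (t^k * exp (t * vline \<beta> x)))"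
proof -
  have "((\<lambda>z. t^k * exp (t * z)) has_field_derivative t^(Suc k) * exp (t * z)) (at z)" for k z
    by (auto intro!: derivative_eq_intros simp: mult_ac)
  from smooth_comp_vline[of \<beta> UNIV "\<lambda>k z. t^k * exp (t * z)", OF _ this]
    nderiv_comp_vline[of \<beta> UNIV "\<lambda>k z. t^k * exp (t * z)", OF _ this]
  show "smooth (\<lambda>x. exp (t * vline \<beta> x))"
    and "nderiv k (\<lambda>x. exp (t * vline \<beta> x)) = (\<lambda>x. (-\<i>)^k * (t^k * exp (t * vline \<beta> x)))"
    by simp_all
qed

lemma cs_distribution_exp_moments:
  assumes T: "cs_distribution T" and B: "seminorm_bound T C K m"
  shows "(\<lambda>n. (t^n / fact n) * moment T \<beta> n) sums T (\<lambda>x. exp (t * vline \<beta> x))"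
proof (rule cs_distribution_powser_moments[OF T B smooth_exp_vline, where R = "norm \<beta> + K" and r = "norm \<beta> + K + 1"])
  show "norm (vline \<beta> x) \<le> norm \<beta> + K" if "x \<in> {-K..K}" for x
    using that by (rule norm_vline_le_interval)
  show "summable (\<lambda>n. t^n / fact n * z^n)" for z
    using exp_powser_sums by (rule sums_summable)
  fix k x
  have "t^k * exp (t * vline \<beta> x) = (\<Sum>n. (diffs^^k) (\<lambda>n. t^n / fact n) n * (vline \<beta> x)^n)"
  proof (rule higher_deriv_eq_powser[where g = "\<lambda>k z. t^k * exp (t * z)" and r = "norm (vline \<beta> x) + 1"])
    show "summable (\<lambda>n. t^n / fact n * z^n)" for z
      using exp_powser_sums by (rule sums_summable)
    show "t^0 * exp (t * z) = (\<Sum>n. t^n / fact n * z^n)" for z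
      using exp_powser_sums by (simp add: sums_iff)
  qed (auto intro!: derivative_eq_intros simp: mult_ac)
  then show "nderiv k (\<lambda>x. exp (t * vline \<beta> x)) x =
      (-\<i>)^k * (\<Sum>n. (diffs^^k) (\<lambda>n. t^n / fact n) n * (vline \<beta> x)^n)"
    by (simp add: nderiv_exp_vline)
qed simp

text \<open>\<open>cauchy_kernel w k\<close> is the \<open>k\<close>-th derivative of \<open>z \<mapsto> 1 / (w - z)\<close>.\<close>

definition cauchy_kernel :: "complex \<Rightarrow> nat \<Rightarrow> complex \<Rightarrow> complex" where
  "cauchy_kernel w k z = fact k * inverse ((w - z)^(Suc k))"

lemma cauchy_kernel_0: "cauchy_kernel w 0 z = 1 / (w - z)"
  by (simp add: cauchy_kernel_def divide_inverse)

lemma cauchy_kernel_has_field_derivative: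
  "z \<noteq> w \<Longrightarrow> (cauchy_kernel w k has_field_derivative cauchy_kernel w (Suc k) z) (at z)"
  unfolding cauchy_kernel_def by (rule derivative_eq_intros refl | simp)+

lemma
  assumes "\<And>x. vline \<beta> x \<noteq> w"
  shows smooth_cauchy_kernel_vline: "smooth (\<lambda>x. cauchy_kernel w j (vline \<beta> x))"
    and nderiv_cauchy_kernel_vline: "nderiv k (\<lambda>x. cauchy_kernel w j (vline \<beta> x)) =
          (\<lambda>x. (-\<i>)^k * cauchy_kernel w (j + k) (vline \<beta> x))"
proof -
  have "(cauchy_kernel w (j + k) has_field_derivative cauchy_kernel w (j + Suc k) z) (at z)"
    if "z \<in> -{w}" for k z
    using cauchy_kernel_has_field_derivative[of z w "j + k"] that by simp
  from smooth_comp_vline[of \<beta> "-{w}" "\<lambda>k. cauchy_kernel w (j + k)", OF _ this]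
    nderiv_comp_vline[of \<beta> "-{w}" "\<lambda>k. cauchy_kernel w (j + k)", OF _ this] assms
  show "smooth (\<lambda>x. cauchy_kernel w j (vline \<beta> x))"
    and "nderiv k (\<lambda>x. cauchy_kernel w j (vline \<beta> x)) =
          (\<lambda>x. (-\<i>)^k * cauchy_kernel w (j + k) (vline \<beta> x))"
    by auto
qed

lemma cauchy_kernel_powser_sums:
  assumes "norm z < norm w"
  shows "(\<lambda>n. (1 / w^(Suc n)) * z^n) sums cauchy_kernel w 0 z"
proof -
  have w0: "w \<noteq> 0" using assms by auto
  have "norm (z / w) < 1" using assms w0 by (simp add: norm_divide)
  then have "(\<lambda>n. (1/w) * (z/w)^n) sums ((1/w) * (1 / (1 - z/w)))"
    by (intro sums_mult geometric_sums)
  moreover have "(1/w) * (1 / (1 - z/w)) = cauchy_kernel w 0 z"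
    using w0 assms by (auto simp: cauchy_kernel_def field_simps)
  ultimately show ?thesis by (simp add: power_divide)
qed

lemma cs_distribution_cauchy_kernel_moments:
  assumes T: "cs_distribution T" and B: "seminorm_bound T C K m"
    and R: "\<And>x. x \<in> {-K..K} \<Longrightarrow> norm (vline \<beta> x) \<le> R" and Rw: "R < norm w"
    and nw: "\<And>x. vline \<beta> x \<noteq> w"
  shows "(\<lambda>n. (1 / w^(Suc n)) * moment T \<beta> n) sums T (\<lambda>x. cauchy_kernel w 0 (vline \<beta> x))"
proof (rule cs_distribution_powser_moments[OF T B smooth_cauchy_kernel_vline[OF nw] R Rw])
  show "summable (\<lambda>n. 1 / w ^ Suc n * z ^ n)" if "norm z < norm w" for z
    using cauchy_kernel_powser_sums[OF that] by (rule sums_summable)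
  fix k x assume "x \<in> {-K..K}"
  have "cauchy_kernel w k (vline \<beta> x) = (\<Sum>n. (diffs^^k) (\<lambda>n. 1 / w^(Suc n)) n * (vline \<beta> x)^n)"
  proof (rule higher_deriv_eq_powser[of "norm w"])
    show "summable (\<lambda>n. 1 / w ^ Suc n * z ^ n)" if "norm z < norm w" for z
      using cauchy_kernel_powser_sums[OF that] by (rule sums_summable)
    show "(cauchy_kernel w k has_field_derivative cauchy_kernel w (Suc k) z) (at z)"
      if "norm z < norm w" for k z
      by (rule cauchy_kernel_has_field_derivative) (use that in auto)
    show "cauchy_kernel w 0 z = (\<Sum>n. 1 / w ^ Suc n * z ^ n)" if "norm z < norm w" for z
      using cauchy_kernel_powser_sums[OF that] by (simp add: sums_iff)
    show "norm (vline \<beta> x) < norm w" using R[OF \<open>x \<in> {-K..K}\<close>] Rw by simp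
  qed
  then show "nderiv k (\<lambda>x. cauchy_kernel w 0 (vline \<beta> x)) x =
      (-\<i>)^k * (\<Sum>n. (diffs^^k) (\<lambda>n. 1 / w^(Suc n)) n * (vline \<beta> x)^n)"
    by (simp add: nderiv_cauchy_kernel_vline[OF nw])
qed

section \<open>The Cauchy transform\<close>

definition cauchy_transform :: "((real \<Rightarrow> complex) \<Rightarrow> complex) \<Rightarrow> complex \<Rightarrow> complex" where
  "cauchy_transform T w = T (\<lambda>x. cauchy_kernel w 0 (vline 0 x))"

lemma vline_0_neq: "Re w \<noteq> 0 \<Longrightarrow> vline 0 x \<noteq> w"
  by auto

lemma abs_Re_gt_if_mem_ball: "y \<in> ball w0 (\<bar>Re w0\<bar> / 2) \<Longrightarrow> \<bar>Re w0\<bar> / 2 < \<bar>Re y\<bar>"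
  using abs_Re_le_cmod[of "y - w0"] by (simp add: dist_norm norm_minus_commute)

lemma abs_Re_le_norm_diff_vline_0: "\<bar>Re w\<bar> \<le> norm (w - vline 0 x)"
  using abs_Re_le_cmod[of "w - vline 0 x"] by simp

lemma norm_cauchy_kernel_le:
  assumes "\<rho> > 0" "norm (w - z) \<ge> \<rho>"
  shows "norm (cauchy_kernel w k z) \<le> fact k / \<rho>^(Suc k)"
proof -
  have "\<rho>^(Suc k) \<le> norm (w - z)^(Suc k)" by (rule power_mono) (use assms in auto)
  moreover have "norm (cauchy_kernel w k z) = fact k / norm (w - z)^(Suc k)"
    by (simp add: cauchy_kernel_def norm_mult norm_inverse norm_power divide_inverse)
  moreover have "0 < norm (w - z)" using assms by linarith
  ultimately show ?thesis
    using assms by (auto intro!: divide_left_mono mult_pos_pos)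
qed

lemma cauchy_transform_bound:
  assumes B: "seminorm_bound T C K m" and w: "Re w \<noteq> 0" and \<rho>: "\<rho> > 0"
    and dist: "\<And>x. x \<in> {-K..K} \<Longrightarrow> norm (w - vline 0 x) \<ge> \<rho>"
  shows "norm (cauchy_transform T w) \<le> C * (\<Sum>k\<le>m. fact k / \<rho>^(Suc k))"
  unfolding cauchy_transform_def
proof (rule seminorm_boundD[OF B smooth_cauchy_kernel_vline[OF vline_0_neq[OF w]]])
  fix k x assume k: "k \<le> m" and x: "x \<in> {-K..K}"
  have "norm (nderiv k (\<lambda>x. cauchy_kernel w 0 (vline 0 x)) x) = norm (cauchy_kernel w k (vline 0 x))"
    unfolding nderiv_cauchy_kernel_vline[OF vline_0_neq[OF w]] by (simp add: norm_mult norm_power)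
  also have "\<dots> \<le> fact k / \<rho>^(Suc k)" by (rule norm_cauchy_kernel_le[OF \<rho> dist[OF x]])
  also have "\<dots> \<le> (\<Sum>k\<le>m. fact k / \<rho>^(Suc k))"
    by (rule member_le_sum) (use k \<rho> in auto)
  finally show "norm (nderiv k (\<lambda>x. cauchy_kernel w 0 (vline 0 x)) x) \<le> (\<Sum>k\<le>m. fact k / \<rho>^(Suc k))" .
qed

lemma cauchy_transform_bound_Re:
  assumes "seminorm_bound T C K m" "0 < \<rho>" "\<rho> \<le> \<bar>Re w\<bar>"
  shows "norm (cauchy_transform T w) \<le> C * (\<Sum>k\<le>m. fact k / \<rho>^(Suc k))"
  using assms abs_Re_le_norm_diff_vline_0[of w] order_trans
  by (intro cauchy_transform_bound) auto

lemma cauchy_transform_bound_far: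
  assumes B: "seminorm_bound T C K m" and w: "Re w \<noteq> 0" "norm w \<ge> K + 1"
  shows "norm (cauchy_transform T w) \<le> C * (\<Sum>k\<le>m. fact k)"
proof -
  have "norm (w - vline 0 x) \<ge> 1" if "x \<in> {-K..K}" for x
    using norm_vline_le_interval[OF that, of 0] w(2) norm_triangle_ineq2[of w "vline 0 x"] by simp
  from cauchy_transform_bound[OF B w(1) zero_less_one this] show ?thesis by simp
qed

lemma cauchy_transform_tendsto_0:
  assumes B: "seminorm_bound T C K m"
  shows "((\<lambda>x. cauchy_transform T (complex_of_real x)) \<longlongrightarrow> 0) at_top"
proof (rule Lim_null_comparison)
  show "\<forall>\<^sub>F x in at_top. norm (cauchy_transform T (complex_of_real x)) \<le> C * (\<Sum>k\<le>m. fact k / x^(Suc k))"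
    using eventually_gt_at_top[of 0]
    by eventually_elim (rule cauchy_transform_bound_Re[OF B], simp_all)
  have "((\<lambda>x::real. fact k / x^(Suc k)) \<longlongrightarrow> 0) at_top" for k
    by (intro tendsto_divide_0[OF tendsto_const] filterlim_at_top_imp_at_infinity
        filterlim_pow_at_top[OF zero_less_Suc filterlim_ident])
  then show "((\<lambda>x. C * (\<Sum>k\<le>m. fact k / x^(Suc k))) \<longlongrightarrow> 0) at_top"
    by (intro tendsto_mult_right_zero tendsto_null_sum)
qed

lemma cauchy_kernel_has_field_derivative_pole:
  assumes "y \<noteq> z"
  shows "((\<lambda>w. cauchy_kernel w k z) has_field_derivative - cauchy_kernel y (Suc k) z) (at y within S)"
proof -
  have yz: "y - z \<noteq> 0" using assms by simp
  have "((\<lambda>w. (w - z)^(Suc k)) has_field_derivative of_nat (Suc k) * (y - z)^k) (at y within S)"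
    by (rule derivative_eq_intros refl)+ simp
  from DERIV_cmult[OF DERIV_inverse_fun[OF this power_not_zero[OF yz]], of "fact k"]
  have D: "((\<lambda>w. cauchy_kernel w k z) has_field_derivative
      fact k * - (of_nat (Suc k) * (y - z)^k * inverse (((y - z)^(Suc k))^2))) (at y within S)"
    unfolding cauchy_kernel_def numeral_2_eq_2 .
  have E: "fact k * - (of_nat (Suc k) * u^k * inverse ((u^(Suc k))^2)) =
      - (fact (Suc k) * inverse (u^(Suc (Suc k))))" if "u \<noteq> 0" for u :: complex
  proof -
    have "(u^(Suc k))^2 = u^k * u^(Suc (Suc k))"
      by (simp only: power2_eq_square power_add[symmetric]) simp
    then show ?thesis using that by (simp add: field_simps)
  qed
  show ?thesis using D unfolding E[OF yz] cauchy_kernel_def .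
qed

text \<open>Taylor's theorem of order two in the pole variable.\<close>

lemma cauchy_kernel_difference_quotient:
  assumes w0: "Re w0 \<noteq> 0" and z: "Re z = 0"
    and y: "y \<in> ball w0 (\<bar>Re w0\<bar> / 2)" and yw: "y \<noteq> w0"
  shows "norm ((cauchy_kernel y k z - cauchy_kernel w0 k z) / (y - w0) + cauchy_kernel w0 (Suc k) z)
         \<le> fact (Suc (Suc k)) / (\<bar>Re w0\<bar> / 2)^(Suc (Suc (Suc k))) * norm (y - w0)"
proof -
  define d where "d = \<bar>Re w0\<bar> / 2"
  have d0: "d > 0" using w0 by (simp add: d_def)
  define S where "S = ball w0 d"
  have Sd: "norm (u - z) \<ge> d" if "u \<in> S" for u
  proof -
    have "d \<le> \<bar>Re u\<bar>" using abs_Re_gt_if_mem_ball[of u w0] that by (simp add: S_def d_def)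
    also have "\<bar>Re u\<bar> = \<bar>Re (u - z)\<bar>" using z by simp
    also have "\<dots> \<le> norm (u - z)" by (rule abs_Re_le_cmod)
    finally show ?thesis .
  qed
  have Sz: "u \<noteq> z" if "u \<in> S" for u using Sd[OF that] d0 by auto
  define f where "f = (\<lambda>(i::nat) u. if i = 0 then cauchy_kernel u k z
      else if i = 1 then - cauchy_kernel u (Suc k) z else cauchy_kernel u (Suc (Suc k)) z)"
  have fD: "(f i has_field_derivative f (Suc i) u) (at u within S)" if "u \<in> S" "i \<le> 1" for i u
  proof (cases "i = 0")
    case True
    then show ?thesis using cauchy_kernel_has_field_derivative_pole[OF Sz[OF that(1)]] by (simp add: f_def)
  next
    case False
    have "((\<lambda>w. - cauchy_kernel w (Suc k) z) has_field_derivative - (- cauchy_kernel u (Suc (Suc k)) z))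
        (at u within S)"
      by (intro DERIV_minus cauchy_kernel_has_field_derivative_pole Sz that)
    then show ?thesis using False that by (simp add: f_def)
  qed
  have "y \<in> S" "w0 \<in> S" using y d0 by (simp_all add: S_def d_def)
  have taylor: "norm (f 0 y - (\<Sum>i\<le>1. f i w0 * (y - w0)^i / fact i))
      \<le> fact (Suc (Suc k)) / d^(Suc (Suc (Suc k))) * norm (y - w0)^(Suc 1) / fact 1"
  proof (rule complex_Taylor[of S 1 f])
    show "norm (f (Suc 1) u) \<le> fact (Suc (Suc k)) / d^(Suc (Suc (Suc k)))" if "u \<in> S" for u
      using norm_cauchy_kernel_le[OF d0 Sd[OF that], of "Suc (Suc k)"] by (simp add: f_def)
  qed (use fD \<open>y \<in> S\<close> \<open>w0 \<in> S\<close> in \<open>auto simp: S_def\<close>)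
  have "f 0 y - (\<Sum>i\<le>1. f i w0 * (y - w0)^i / fact i) = (y - w0) *
      ((cauchy_kernel y k z - cauchy_kernel w0 k z) / (y - w0) + cauchy_kernel w0 (Suc k) z)"
    using yw by (simp add: f_def field_simps)
  with taylor have "norm (y - w0) * norm ((cauchy_kernel y k z - cauchy_kernel w0 k z) / (y - w0)
        + cauchy_kernel w0 (Suc k) z)
      \<le> norm (y - w0) * (fact (Suc (Suc k)) / d^(Suc (Suc (Suc k))) * norm (y - w0))"
    by (simp only: norm_mult) (simp add: power2_eq_square mult_ac)
  from mult_left_le_imp_le[OF this] yw show ?thesis unfolding d_def by simp
qed

lemma nderiv_cauchy_kernel_difference_quotient:
  assumes y: "Re y \<noteq> 0" and w0: "Re w0 \<noteq> 0"
  shows "nderiv k (\<lambda>x. (1 / (y - w0)) * cauchy_kernel y 0 (vline 0 x) +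
             (- 1 / (y - w0)) * cauchy_kernel w0 0 (vline 0 x)) x
           - nderiv k (\<lambda>x. (-1) * cauchy_kernel w0 1 (vline 0 x)) x =
         (-\<i>)^k * ((cauchy_kernel y k (vline 0 x) - cauchy_kernel w0 k (vline 0 x)) / (y - w0)
           + cauchy_kernel w0 (Suc k) (vline 0 x))"
  unfolding nderiv_lincomb[OF smooth_cauchy_kernel_vline[OF vline_0_neq[OF y]]
      smooth_cauchy_kernel_vline[OF vline_0_neq[OF w0]]]
    nderiv_scaled[OF smooth_cauchy_kernel_vline[OF vline_0_neq[OF w0]]]
    nderiv_cauchy_kernel_vline[OF vline_0_neq[OF y]] nderiv_cauchy_kernel_vline[OF vline_0_neq[OF w0]]
  by (simp add: diff_divide_distrib ring_distribs mult_ac)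

lemma cauchy_transform_has_field_derivative:
  assumes T: "cs_distribution T" and B: "seminorm_bound T C K m" and w0: "Re w0 \<noteq> 0"
  shows "(cauchy_transform T has_field_derivative - T (\<lambda>x. cauchy_kernel w0 1 (vline 0 x))) (at w0)"
proof -
  define d where "d = \<bar>Re w0\<bar> / 2"
  have d0: "d > 0" using w0 by (simp add: d_def)
  have near: "Re y \<noteq> 0" if "y \<in> ball w0 d" for y
    using abs_Re_gt_if_mem_ball[of y w0] that by (auto simp: d_def)
  define \<kappa> where "\<kappa> y = (\<lambda>x. cauchy_kernel y 0 (vline 0 x))" for y
  have sm\<kappa>: "smooth (\<kappa> y)" if "Re y \<noteq> 0" for y
    unfolding \<kappa>_def using smooth_cauchy_kernel_vline[OF vline_0_neq[OF that]] .
  define Q where "Q y = (\<lambda>x. (1 / (y - w0)) * \<kappa> y x + (- 1 / (y - w0)) * \<kappa> w0 x)" for y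
  define \<kappa>' where "\<kappa>' = (\<lambda>x. (-1) * cauchy_kernel w0 1 (vline 0 x))"
  have sm\<kappa>1: "smooth (\<lambda>x. cauchy_kernel w0 1 (vline 0 x))"
    by (intro smooth_cauchy_kernel_vline vline_0_neq w0)
  have sm\<kappa>': "smooth \<kappa>'"
    unfolding \<kappa>'_def by (intro smooth_scaled sm\<kappa>1)
  have smQ: "smooth (Q y)" if "Re y \<noteq> 0" for y
    unfolding Q_def by (intro smooth_lincomb sm\<kappa> that w0)
  have TQ: "T (Q y) = (cauchy_transform T y - cauchy_transform T w0) / (y - w0)" if "Re y \<noteq> 0" for y
  proof -
    have "T (Q y) = (1 / (y - w0)) * T (\<kappa> y) + (- 1 / (y - w0)) * T (\<kappa> w0)"
      unfolding Q_def by (rule cs_distribution_lincomb[OF T sm\<kappa>[OF that] sm\<kappa>[OF w0]])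
    then show ?thesis by (simp add: cauchy_transform_def \<kappa>_def diff_divide_distrib)
  qed
  have "((\<lambda>y. T (Q y)) \<longlongrightarrow> T \<kappa>') (at w0)"
  proof (rule cs_distribution_tendsto[OF T B sm\<kappa>'])
    show "\<forall>\<^sub>F y in at w0. smooth (Q y)"
      unfolding eventually_at using d0 near smQ by (auto intro!: exI[of _ d] simp: dist_commute)
    define M where "M = (\<Sum>k\<le>m. fact (Suc (Suc k)) / d^(Suc (Suc (Suc k))))"
    have M0: "M \<ge> 0" unfolding M_def using d0 by (intro sum_nonneg) auto
    fix \<epsilon> :: real assume e: "\<epsilon> > 0"
    show "\<forall>\<^sub>F y in at w0. \<forall>k\<le>m. \<forall>x\<in>{-K..K}. norm (nderiv k (Q y) x - nderiv k \<kappa>' x) \<le> \<epsilon>"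
      unfolding eventually_at
    proof (rule exI[of _ "min d (\<epsilon> / (M + 1))"], intro conjI ballI impI allI)
      fix y k x assume yy: "y \<noteq> w0 \<and> dist y w0 < min d (\<epsilon> / (M + 1))" and k: "k \<le> m"
      have yb: "y \<in> ball w0 d" using yy by (simp add: dist_commute)
      have "norm (nderiv k (Q y) x - nderiv k \<kappa>' x) = norm ((cauchy_kernel y k (vline 0 x) -
          cauchy_kernel w0 k (vline 0 x)) / (y - w0) + cauchy_kernel w0 (Suc k) (vline 0 x))"
        unfolding Q_def \<kappa>_def \<kappa>'_def nderiv_cauchy_kernel_difference_quotient[OF near[OF yb] w0]
        by (simp add: norm_mult norm_power)
      also have "\<dots> \<le> fact (Suc (Suc k)) / d^(Suc (Suc (Suc k))) * norm (y - w0)"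
        unfolding d_def by (rule cauchy_kernel_difference_quotient) (use w0 yb yy in \<open>auto simp: d_def\<close>)
      also have "\<dots> \<le> M * norm (y - w0)"
        unfolding M_def by (intro mult_right_mono member_le_sum) (use k d0 in auto)
      also have "\<dots> \<le> M * (\<epsilon> / (M + 1))"
        using yy M0 by (intro mult_left_mono) (auto simp: dist_norm)
      also have "\<dots> \<le> \<epsilon>" using M0 e by (simp add: field_simps)
      finally show "norm (nderiv k (Q y) x - nderiv k \<kappa>' x) \<le> \<epsilon>" .
    qed (use d0 e M0 in auto)
  qed
  moreover have "\<forall>\<^sub>F y in at w0. T (Q y) = (cauchy_transform T y - cauchy_transform T w0) / (y - w0)"
    unfolding eventually_at using d0 near TQ by (auto intro!: exI[of _ d] simp: dist_commute)
  ultimately have "((\<lambda>y. (cauchy_transform T y - cauchy_transform T w0) / (y - w0)) \<longlongrightarrow> T \<kappa>') (at w0)"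
    by (rule Lim_transform_eventually)
  moreover have "T \<kappa>' = - T (\<lambda>x. cauchy_kernel w0 1 (vline 0 x))"
    unfolding \<kappa>'_def using cs_distribution_scaled[OF T sm\<kappa>1, of "-1"] by simp
  ultimately show ?thesis unfolding has_field_derivative_iff by simp
qed

lemma holomorphic_on_cauchy_transform:
  assumes "cs_distribution T" "seminorm_bound T C K m"
  shows "cauchy_transform T holomorphic_on {w. Re w \<noteq> 0}"
  unfolding holomorphic_on_def field_differentiable_def
  using cauchy_transform_has_field_derivative[OF assms] by (blast intro: has_field_derivative_at_within)

section \<open>Distributions with vanishing moments\<close>

lemma powser_coeff_0_eq_zero:
  fixes c :: "nat \<Rightarrow> complex"
  assumes e: "\<epsilon> > 0" and S: "\<And>x. 0 < x \<Longrightarrow> x < \<epsilon> \<Longrightarrow> (\<lambda>n. c n * complex_of_real x ^ n) sums 0"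
  shows "c 0 = 0"
proof -
  have "summable (\<lambda>n. c n * complex_of_real (\<epsilon> / 2) ^ n)"
    using S[of "\<epsilon> / 2"] e sums_summable by auto
  then have "isCont (\<lambda>z. \<Sum>n. c n * z^n) 0"
    by (rule isCont_powser) (use e in simp)
  from isCont_tendsto_compose[OF this tendsto_of_real[OF tendsto_ident_at[of "0::real" "{0<..}"], unfolded of_real_0]]
  have "((\<lambda>x. \<Sum>n. c n * complex_of_real x ^ n) \<longlongrightarrow> c 0) (at_right 0)"
    by simp
  moreover have "\<forall>\<^sub>F x in at_right 0. (\<Sum>n. c n * complex_of_real x ^ n) = 0"
    using eventually_at_right_real[OF e] by eventually_elim (use S in \<open>auto simp: sums_iff\<close>)
  ultimately have "((\<lambda>x. 0) \<longlongrightarrow> c 0) (at_right (0::real))"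
    by (rule Lim_transform_eventually)
  then show ?thesis by (simp add: tendsto_const_iff)
qed

lemma powser_coeffs_eq_zero:
  fixes c :: "nat \<Rightarrow> complex"
  assumes e: "\<epsilon> > 0" and S: "\<And>x. 0 < x \<Longrightarrow> x < \<epsilon> \<Longrightarrow> (\<lambda>n. c n * complex_of_real x ^ n) sums 0"
  shows "c n = 0"
  using S
proof (induction n arbitrary: c)
  case 0 then show ?case using powser_coeff_0_eq_zero[OF e] by blast
next
  case (Suc n)
  have c0: "c 0 = 0" using powser_coeff_0_eq_zero[OF e Suc.prems] .
  have "(\<lambda>k. c (Suc k) * complex_of_real x ^ k) sums 0" if x: "0 < x" "x < \<epsilon>" for x
  proof -
    have "(\<lambda>k. c (Suc k) * complex_of_real x ^ (Suc k)) sums 0"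
      using Suc.prems[OF x] sums_Suc_iff[of "\<lambda>k. c k * complex_of_real x ^ k" 0] c0 by simp
    from sums_mult2[OF this, of "inverse (complex_of_real x)"] show ?thesis
      using x by (simp add: field_simps)
  qed
  then show ?case using Suc.IH[of "\<lambda>k. c (Suc k)"] by simp
qed

lemma moments_eq_zero_if_cauchy_transform_vanishes:
  assumes T: "cs_distribution T" and B: "seminorm_bound T C K m"
    and V: "\<And>x. x > 0 \<Longrightarrow> cauchy_transform T (complex_of_real x) = 0"
  shows "moment T 0 n = 0"
proof (rule powser_coeffs_eq_zero[of "1 / (K + 1)"])
  have K0: "K \<ge> 0" using seminorm_bound_nonneg[OF B] by simp
  then show "1 / (K + 1) > 0" by simp
  fix s :: real assume s: "0 < s" "s < 1 / (K + 1)"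
  define w where "w = complex_of_real (1 / s)"
  have "K + 1 < 1 / s" using s K0 by (simp add: field_simps)
  moreover have "norm w = 1 / s" unfolding w_def norm_of_real using s by simp
  ultimately have "K < norm w" by linarith
  moreover have "norm (vline 0 x) \<le> K" if "x \<in> {-K..K}" for x
    using norm_vline_le_interval[OF that, of 0] by simp
  moreover have "vline 0 x \<noteq> w" for x using s by (auto simp: w_def complex_eq_iff)
  ultimately have "(\<lambda>n. (1 / w^(Suc n)) * moment T 0 n) sums cauchy_transform T w"
    unfolding cauchy_transform_def by (intro cs_distribution_cauchy_kernel_moments[OF T B])
  moreover have "cauchy_transform T w = 0" unfolding w_def by (rule V) (use s in simp)
  ultimately have "(\<lambda>n. w * ((1 / w^(Suc n)) * moment T 0 n)) sums 0"
    by (metis mult_zero_right sums_mult)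
  moreover have "w * ((1 / w^(Suc n)) * moment T 0 n) = moment T 0 n * complex_of_real s ^ n" for n
  proof -
    have "w \<noteq> 0" using s by (simp add: w_def)
    then have "w * (1 / w^(Suc n)) = (1 / w)^n" by (simp add: power_one_over)
    also have "1 / w = complex_of_real s" using s by (simp add: w_def)
    finally show ?thesis by (metis mult.assoc mult.commute)
  qed
  ultimately show "(\<lambda>n. moment T 0 n * complex_of_real s ^ n) sums 0" by simp
qed

text \<open>Polynomials in \<open>x\<close>, written in the variable \<open>vline 0 x = -\<i> x\<close> so that a distribution
  maps them to combinations of its moments at \<open>0\<close>.\<close>

definition complex_polynomial :: "(real \<Rightarrow> complex) \<Rightarrow> bool" where
  "complex_polynomial Q \<longleftrightarrow> (\<exists>c N. Q = (\<lambda>x. partial_powser c N (vline 0 x)))"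

lemma complex_polynomial_smooth: "complex_polynomial Q \<Longrightarrow> smooth Q"
  unfolding complex_polynomial_def using smooth_partial_powser_vline by blast

lemma cs_distribution_complex_polynomial:
  assumes "cs_distribution T" "\<And>n. moment T 0 n = 0" "complex_polynomial Q"
  shows "T Q = 0"
proof -
  obtain c N where "Q = (\<lambda>x. partial_powser c N (vline 0 x))"
    using assms(3) unfolding complex_polynomial_def by blast
  then show ?thesis by (simp only: cs_distribution_partial_powser[OF assms(1)] assms(2)) simp
qed

lemma complex_polynomial_antiderivative:
  assumes "complex_polynomial Q"
  obtains P where "complex_polynomial P" "nderiv 1 P = Q" "P 0 = v"
proof -
  obtain c N where Q: "Q = (\<lambda>x. partial_powser c N (vline 0 x))"
    using assms unfolding complex_polynomial_def by blast
  define c' where "c' n = (if n = 0 then v else \<i> * c (n - 1) / of_nat n)" for n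
  have "diffs c' = (\<lambda>n. \<i> * c n)"
    unfolding diffs_def c'_def by (auto simp del: of_nat_Suc)
  moreover have "nderiv 1 (\<lambda>x. partial_powser c' (Suc N) (vline 0 x)) =
      (\<lambda>x. (-\<i>) * partial_powser (diffs c') N (vline 0 x))"
    unfolding nderiv_partial_powser_vline by simp
  ultimately have "nderiv 1 (\<lambda>x. partial_powser c' (Suc N) (vline 0 x)) = Q"
    unfolding Q partial_powser_def by (simp add: sum_distrib_left mult.assoc[symmetric])
  moreover have "partial_powser c' (Suc N) (vline 0 0) = v"
    unfolding partial_powser_def by (simp add: c'_def zero_power sum.lessThan_Suc_shift del: sum.lessThan_Suc)
  ultimately show ?thesis
    using that[of "\<lambda>x. partial_powser c' (Suc N) (vline 0 x)"] unfolding complex_polynomial_def by blast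
qed

lemma complex_polynomial_add:
  assumes "complex_polynomial P" "complex_polynomial Q"
  shows "complex_polynomial (\<lambda>x. P x + Q x)"
proof -
  obtain c N d M where P: "P = (\<lambda>x. partial_powser c N (vline 0 x))"
    and Q: "Q = (\<lambda>x. partial_powser d M (vline 0 x))"
    using assms unfolding complex_polynomial_def by blast
  have pad: "partial_powser e A z = partial_powser (\<lambda>n. if n < A then e n else 0) (A + B) z" for e A B z
    unfolding partial_powser_def by (induction B) auto
  have "(\<lambda>x. P x + Q x) = (\<lambda>x. partial_powser (\<lambda>n. (if n < N then c n else 0) +
      (if n < M then d n else 0)) (N + M) (vline 0 x))"
    unfolding P Q pad[of c N _ M] pad[of d M _ N]
    by (simp add: partial_powser_def sum.distrib distrib_right add.commute)
  then show ?thesis unfolding complex_polynomial_def by blast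
qed

lemma complex_polynomial_scaled:
  assumes "complex_polynomial P"
  shows "complex_polynomial (\<lambda>x. a * P x)"
proof -
  obtain c N where "P = (\<lambda>x. partial_powser c N (vline 0 x))"
    using assms unfolding complex_polynomial_def by blast
  then have "(\<lambda>x. a * P x) = (\<lambda>x. partial_powser (\<lambda>n. a * c n) N (vline 0 x))"
    by (simp add: partial_powser_def sum_distrib_left mult.assoc)
  then show ?thesis unfolding complex_polynomial_def by blast
qed

lemma complex_polynomial_of_real: "complex_polynomial (\<lambda>x. complex_of_real (\<Sum>i\<le>n. a i * x^i))"
proof -
  have "complex_of_real x ^ i = \<i>^i * (vline 0 x)^i" for x i
    by (simp add: power_mult_distrib[symmetric])
  then have "(\<lambda>x. complex_of_real (\<Sum>i\<le>n. a i * x^i)) =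
      (\<lambda>x. partial_powser (\<lambda>i. complex_of_real (a i) * \<i>^i) (Suc n) (vline 0 x))"
    unfolding partial_powser_def lessThan_Suc_atMost by (simp add: mult.assoc)
  then show ?thesis unfolding complex_polynomial_def by blast
qed

lemma polynomial_function_imp_complex_polynomial:
  fixes g :: "real \<Rightarrow> complex"
  assumes "polynomial_function g"
  shows "complex_polynomial g"
proof -
  have "real_polynomial_function (\<lambda>x. g x \<bullet> 1)" "real_polynomial_function (\<lambda>x. g x \<bullet> \<i>)"
    using assms complex_Basis_1 complex_Basis_i unfolding polynomial_function_iff_Basis_inner by blast+
  then have "real_polynomial_function (\<lambda>x. Re (g x))" "real_polynomial_function (\<lambda>x. Im (g x))"
    by auto
  then obtain a n b k where Re: "(\<lambda>x. Re (g x)) = (\<lambda>x. \<Sum>i\<le>n. a i * x^i)"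
      and Im: "(\<lambda>x. Im (g x)) = (\<lambda>x. \<Sum>i\<le>k. b i * x^i)"
    unfolding real_polynomial_function_iff_sum by blast
  have "g = (\<lambda>x. complex_of_real (\<Sum>i\<le>n. a i * x^i) + \<i> * complex_of_real (\<Sum>i\<le>k. b i * x^i))"
  proof
    fix x
    show "g x = complex_of_real (\<Sum>i\<le>n. a i * x^i) + \<i> * complex_of_real (\<Sum>i\<le>k. b i * x^i)"
      using fun_cong[OF Re, of x] fun_cong[OF Im, of x] by (simp add: complex_eq_iff)
  qed
  then show ?thesis
    by (simp only: complex_polynomial_add complex_polynomial_scaled complex_polynomial_of_real)
qed

lemma complex_polynomial_approx:
  assumes "continuous_on {-K..K} f" "\<eta> > 0"
  obtains Q where "complex_polynomial Q" "\<And>x. x \<in> {-K..K} \<Longrightarrow> norm (f x - Q x) \<le> \<eta>"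
proof -
  obtain g where "polynomial_function g" "\<And>x. x \<in> {-K..K} \<Longrightarrow> norm (f x - g x) < \<eta>"
    using Stone_Weierstrass_polynomial_function[OF compact_Icc assms] by blast
  then show ?thesis
    using that[OF polynomial_function_imp_complex_polynomial] by (simp add: less_imp_le)
qed

lemma norm_diff_le_vector_derivative_bound:
  fixes h :: "real \<Rightarrow> 'a::real_normed_vector"
  assumes "convex S" "\<And>y. y \<in> S \<Longrightarrow> (h has_vector_derivative h' y) (at y within S)"
    and "\<And>y. y \<in> S \<Longrightarrow> norm (h' y) \<le> B" "x \<in> S" "y \<in> S"
  shows "norm (h x - h y) \<le> B * \<bar>x - y\<bar>"
  using differentiable_bound[OF assms(1), of h "\<lambda>y t. t *\<^sub>R h' y" B x y] assms
  by (simp add: has_vector_derivative_def onorm_scaleR_left[OF bounded_linear_ident] onorm_id)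

text \<open>Approximate the \<open>m\<close>-th derivative of \<open>\<phi>\<close> uniformly by Stone-Weierstrass and integrate
  \<open>j\<close> times, fixing the constants of integration at \<open>0\<close>.\<close>

lemma complex_polynomial_approx_nderivs:
  assumes sm: "smooth \<phi>" and K0: "K \<ge> 0"
  shows "j \<le> m \<Longrightarrow> \<eta> > 0 \<Longrightarrow> \<exists>Q. complex_polynomial Q \<and>
           (\<forall>k\<le>j. \<forall>x\<in>{-K..K}. norm (nderiv (m - j + k) \<phi> x - nderiv k Q x) \<le> \<eta>)"
proof (induction j arbitrary: \<eta>)
  case 0
  obtain Q where "complex_polynomial Q" "\<And>x. x \<in> {-K..K} \<Longrightarrow> norm (nderiv m \<phi> x - Q x) \<le> \<eta>"
    using complex_polynomial_approx[OF continuous_on_nderiv[OF sm] 0(2)] by blast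
  then show ?case by auto
next
  case (Suc j)
  define \<eta>' where "\<eta>' = \<eta> / (K + 1)"
  have \<eta>': "\<eta>' > 0" "\<eta>' \<le> \<eta>" "\<eta>' * K \<le> \<eta>"
    using Suc.prems K0 by (auto simp: \<eta>'_def field_simps)
  obtain Q where Q: "complex_polynomial Q"
    and QA: "\<And>k x. k \<le> j \<Longrightarrow> x \<in> {-K..K} \<Longrightarrow> norm (nderiv (m - j + k) \<phi> x - nderiv k Q x) \<le> \<eta>'"
    using Suc.IH[OF _ \<eta>'(1)] Suc.prems by auto
  obtain P where P: "complex_polynomial P" "nderiv 1 P = Q" "P 0 = nderiv (m - Suc j) \<phi> 0"
    using complex_polynomial_antiderivative[OF Q] by metis
  have "norm (nderiv (m - Suc j + k) \<phi> x - nderiv k P x) \<le> \<eta>"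
    if k: "k \<le> Suc j" and x: "x \<in> {-K..K}" for k x
  proof (cases k)
    case (Suc k')
    have "nderiv k P = nderiv k' Q" unfolding Suc nderiv_Suc_shift P(2) ..
    moreover have "m - Suc j + k = m - j + k'" "k' \<le> j" using k Suc Suc.prems by simp_all
    ultimately have "norm (nderiv (m - Suc j + k) \<phi> x - nderiv k P x) =
        norm (nderiv (m - j + k') \<phi> x - nderiv k' Q x)" by (simp only:)
    also have "\<dots> \<le> \<eta>'" by (rule QA[OF \<open>k' \<le> j\<close> x])
    finally show ?thesis using \<eta>'(2) by linarith
  next
    case 0
    have "Suc (m - Suc j) = m - j" using Suc.prems by simp
    note d\<phi> = smoothD[OF sm, of "m - Suc j", unfolded this]
    have dP: "(P has_vector_derivative Q y) (at y)" for y
      using smoothD[OF complex_polynomial_smooth[OF P(1)], of 0 y] P(2)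
      by (simp only: nderiv.simps(1) One_nat_def)
    have deriv: "((\<lambda>x. nderiv (m - Suc j) \<phi> x - P x) has_vector_derivative
        nderiv (m - j) \<phi> y - Q y) (at y within {-K..K})" for y
      by (rule has_vector_derivative_at_within[OF has_vector_derivative_diff[OF d\<phi> dP]])
    have bound: "norm (nderiv (m - j) \<phi> y - Q y) \<le> \<eta>'" if "y \<in> {-K..K}" for y
      using QA[OF _ that, of 0] by simp
    have "(0::real) \<in> {-K..K}" using K0 by simp
    from norm_diff_le_vector_derivative_bound[OF convex_real_interval(5) deriv bound x this]
    have "norm ((nderiv (m - Suc j) \<phi> x - P x) - (nderiv (m - Suc j) \<phi> 0 - P 0)) \<le> \<eta>' * \<bar>x - 0\<bar>" .
    then have "norm (nderiv (m - Suc j) \<phi> x - P x) \<le> \<eta>' * \<bar>x\<bar>" using P(3) by simp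
    also have "\<dots> \<le> \<eta>' * K" using x \<eta>'(1) by (intro mult_left_mono) auto
    finally show ?thesis using 0 \<eta>'(3) by simp
  qed
  then show ?case using P(1) by blast
qed

lemma cs_distribution_eq_zero_if_moments_eq_zero:
  assumes T: "cs_distribution T" and B: "seminorm_bound T C K m"
    and Z: "\<And>n. moment T 0 n = 0" and sm: "smooth \<phi>"
  shows "T \<phi> = 0"
proof -
  have C0: "C \<ge> 0" and K0: "K \<ge> 0" using seminorm_bound_nonneg[OF B] by auto
  have le: "norm (T \<phi>) \<le> C * \<eta>" if \<eta>: "\<eta> > 0" for \<eta>
  proof -
    obtain Q where Q: "complex_polynomial Q"
      and A: "\<forall>k\<le>m. \<forall>x\<in>{-K..K}. norm (nderiv k \<phi> x - nderiv k Q x) \<le> \<eta>"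
      using complex_polynomial_approx_nderivs[OF sm K0, where j = m and m = m, OF order.refl \<eta>] by auto
    have sQ: "smooth Q" by (rule complex_polynomial_smooth[OF Q])
    have "norm (T (\<lambda>x. 1 * \<phi> x + (-1) * Q x)) \<le> C * \<eta>"
    proof (rule seminorm_boundD[OF B smooth_lincomb[OF sm sQ]])
      fix k x assume "k \<le> m" "x \<in> {-K..K}"
      then show "norm (nderiv k (\<lambda>x. 1 * \<phi> x + (-1) * Q x) x) \<le> \<eta>"
        unfolding nderiv_lincomb[OF sm sQ] using A by simp
    qed
    then show ?thesis
      using cs_distribution_lincomb[OF T sm sQ, of 1 "-1"] cs_distribution_complex_polynomial[OF T Z Q]
      by simp
  qed
  have "norm (T \<phi>) \<le> 0"
  proof (rule field_le_epsilon)
    fix e :: real assume "e > 0"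
    moreover have "C * (e / (C + 1)) \<le> e" using C0 \<open>e > 0\<close> by (simp add: field_simps)
    ultimately show "norm (T \<phi>) \<le> 0 + e" using le[of "e / (C + 1)"] C0 by simp
  qed
  then show ?thesis by simp
qed

section \<open>Gluing across the imaginary axis\<close>

lemma holomorphic_eq_if_eq_far_out:
  assumes "open S" "connected S" "F holomorphic_on S" "G holomorphic_on S"
    and "\<And>z. z \<in> S \<Longrightarrow> norm z > R \<Longrightarrow> F z = G z"
    and "z0 \<in> S" "norm z0 > R" "z \<in> S"
  shows "F z = G z"
proof (rule analytic_continuation_open[where s = "S \<inter> {z. norm z > R}" and s' = S and f = F and g = G])
  show "open (S \<inter> {z. norm z > R})"
    using assms(1) by (intro open_Int open_Collect_less continuous_intros) auto
qed (use assms in auto)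

text \<open>By analytic continuation, \<open>F\<close> and \<open>G\<close> agree in the whole strip \<open>-\<delta> < Re w < 0\<close> and
  right half plane, where they agree far out.\<close>

lemma holomorphic_glue_across_imaginary_axis:
  fixes F G :: "complex \<Rightarrow> complex"
  assumes \<delta>: "\<delta> > 0"
    and HF: "F holomorphic_on {w. Re w \<noteq> 0}"
    and HG: "G holomorphic_on {w. Re w > -\<delta>}"
    and EQ: "\<And>w. norm w > R \<Longrightarrow> -\<delta> < Re w \<Longrightarrow> Re w \<noteq> 0 \<Longrightarrow> F w = G w"
  obtains E where "E holomorphic_on UNIV" "\<And>w. Re w \<noteq> 0 \<Longrightarrow> E w = F w" "\<And>w. Re w \<ge> 0 \<Longrightarrow> E w = G w"
proof -
  define strip where "strip = {w. -\<delta> < Re w} \<inter> {w. Re w < 0}"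
  have strip: "F w = G w" if "w \<in> strip" for w
  proof (rule holomorphic_eq_if_eq_far_out[of strip F G R "Complex (-\<delta>/2) (\<bar>R\<bar> + 1)"])
    show "open strip" "connected strip" unfolding strip_def
      by (auto intro!: open_Int open_halfspace_Re_gt open_halfspace_Re_lt convex_connected
          convex_Int convex_halfspace_Re_gt convex_halfspace_Re_lt)
    show "F holomorphic_on strip" "G holomorphic_on strip"
      by (auto intro: holomorphic_on_subset[OF HF] holomorphic_on_subset[OF HG] simp: strip_def)
    have "\<bar>R\<bar> + 1 \<le> norm (Complex (-\<delta>/2) (\<bar>R\<bar> + 1))"
      using abs_Im_le_cmod[of "Complex (-\<delta>/2) (\<bar>R\<bar> + 1)"] by simp
    then show "norm (Complex (-\<delta>/2) (\<bar>R\<bar> + 1)) > R" by linarith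
  qed (use \<delta> that EQ in \<open>auto simp: strip_def\<close>)
  have right: "F w = G w" if "Re w > 0" for w
  proof (rule holomorphic_eq_if_eq_far_out[of "{w. Re w > 0}" F G R "complex_of_real (\<bar>R\<bar> + 1)"])
    show "open {w. Re w > 0}" "connected {w. Re w > 0}"
      by (auto intro: open_halfspace_Re_gt convex_connected convex_halfspace_Re_gt)
    show "F holomorphic_on {w. Re w > 0}" "G holomorphic_on {w. Re w > 0}"
      using \<delta> by (auto intro: holomorphic_on_subset[OF HF] holomorphic_on_subset[OF HG])
    show "F z = G z" if "z \<in> {w. Re w > 0}" "norm z > R" for z
      using that \<delta> by (intro EQ) auto
  qed (use that in auto)
  define E where "E z = (if z \<in> {w. Re w < -\<delta>/2} then F z else G z)" for z
  have "E holomorphic_on ({w. Re w < -\<delta>/2} \<union> {w. Re w > -\<delta>})"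
    unfolding E_def
  proof (rule holomorphic_on_If_Un)
    show "F holomorphic_on {w. Re w < -\<delta>/2}" using \<delta> by (auto intro: holomorphic_on_subset[OF HF])
    show "F z = G z" if "z \<in> {w. Re w < -\<delta>/2}" "z \<in> {w. Re w > -\<delta>}" for z
      using that \<delta> by (intro strip) (auto simp: strip_def)
  qed (use HG in \<open>auto intro: open_halfspace_Re_lt open_halfspace_Re_gt\<close>)
  moreover have "{w. Re w < -\<delta>/2} \<union> {w. Re w > -\<delta>} = UNIV" using \<delta> by auto
  moreover have "E w = F w" if "Re w \<noteq> 0" for w
    using that \<delta> strip[of w] right[of w] by (cases "Re w < 0") (auto simp: E_def strip_def)
  moreover have "E w = G w" if "Re w \<ge> 0" for w
    using that \<delta> by (simp add: E_def)
  ultimately show ?thesis using that by simp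
qed

lemma glued_function_vanishes:
  fixes F G :: "complex \<Rightarrow> complex"
  assumes \<delta>: "\<delta> > 0"
    and HF: "F holomorphic_on {w. Re w \<noteq> 0}"
    and HG: "G holomorphic_on {w. Re w > -\<delta>}"
    and EQ: "\<And>w. norm w > R \<Longrightarrow> -\<delta> < Re w \<Longrightarrow> Re w \<noteq> 0 \<Longrightarrow> F w = G w"
    and BF: "\<And>w. Re w < 0 \<Longrightarrow> norm w \<ge> R' \<Longrightarrow> norm (F w) \<le> M1"
    and BG: "\<And>w. Re w \<ge> 0 \<Longrightarrow> norm (G w) \<le> M2"
    and lim: "((\<lambda>x. F (complex_of_real x)) \<longlongrightarrow> 0) at_top"
    and x: "x > 0"
  shows "F (complex_of_real x) = 0"
proof -
  obtain E where HE: "E holomorphic_on UNIV"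
    and EF: "\<And>w. Re w \<noteq> 0 \<Longrightarrow> E w = F w" and EG: "\<And>w. Re w \<ge> 0 \<Longrightarrow> E w = G w"
    using holomorphic_glue_across_imaginary_axis[OF \<delta> HF HG EQ] by blast
  obtain B where B: "\<And>w. w \<in> cball 0 \<bar>R'\<bar> \<Longrightarrow> norm (E w) \<le> B"
    using compact_imp_bounded[OF compact_continuous_image[OF
        holomorphic_on_imp_continuous_on[OF holomorphic_on_subset[OF HE]] compact_cball]]
    unfolding bounded_iff by blast
  have "norm (E w) \<le> \<bar>M1\<bar> + \<bar>M2\<bar> + \<bar>B\<bar>" for w
  proof (cases "Re w \<ge> 0")
    case True
    then show ?thesis using BG[OF True] EG[OF True] by simp
  next
    case False
    then show ?thesis
      using BF[of w] B[of w] EF[of w] by (cases "norm w \<ge> R'") force+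
  qed
  then have "bounded (range E)" unfolding bounded_iff by blast
  then obtain c where c: "\<And>w. E w = c"
    using Liouville_theorem[OF HE] unfolding constant_on_def by blast
  have "((\<lambda>x::real. c) \<longlongrightarrow> 0) at_top"
  proof (rule Lim_transform_eventually[OF lim])
    show "\<forall>\<^sub>F x in at_top. F (complex_of_real x) = c"
      using eventually_gt_at_top[of "0::real"]
      by eventually_elim (metis EF c Re_complex_of_real less_irrefl)
  qed
  then have "c = 0" by (simp add: tendsto_const_iff)
  then show ?thesis using EF[of "complex_of_real x"] c x by simp
qed

section \<open>Induction on the dominant exponent\<close>

lemma cs_distribution_exp_vline:
  assumes "cs_distribution T"
  shows "T (\<lambda>x. exp (complex_of_real t * vline (complex_of_real a) x)) =
    fourier_dist T t * complex_of_real (exp (a * t))"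
proof -
  have "exp (complex_of_real t * vline (complex_of_real a) x) =
      complex_of_real (exp (a * t)) * exp (- \<i> * complex_of_real (t * x))" for x
    by (simp add: exp_of_real[symmetric] exp_add[symmetric] algebra_simps)
  moreover have "smooth (\<lambda>x. exp (- \<i> * complex_of_real (t * x)))"
    using smooth_exp_vline[of "complex_of_real t" 0] by (simp add: algebra_simps)
  ultimately show ?thesis
    using cs_distribution_scaled[OF assms] by (simp add: fourier_dist_def mult.commute)
qed

lemma moments_sum_eq_zero:
  fixes f :: "nat \<Rightarrow> (real \<Rightarrow> complex) \<Rightarrow> complex" and a :: "nat \<Rightarrow> real"
  assumes fin: "finite I" and T: "\<And>j. j \<in> I \<Longrightarrow> cs_distribution (f j)"
    and B: "\<And>j. j \<in> I \<Longrightarrow> seminorm_bound (f j) C K m"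
    and rel: "\<And>t. (\<Sum>j\<in>I. fourier_dist (f j) t * complex_of_real (exp (a j * t))) = 0"
  shows "(\<Sum>j\<in>I. moment (f j) (complex_of_real (a j)) n) = 0"
proof -
  define d where "d n = (\<Sum>j\<in>I. moment (f j) (complex_of_real (a j)) n)" for n
  have "(\<lambda>n. d n / fact n * complex_of_real t ^ n) sums 0" for t :: real
  proof -
    have "(\<lambda>n. \<Sum>j\<in>I. (complex_of_real t ^ n / fact n) * moment (f j) (complex_of_real (a j)) n) sums
        (\<Sum>j\<in>I. f j (\<lambda>x. exp (complex_of_real t * vline (complex_of_real (a j)) x)))"
      by (rule sums_sum, rule cs_distribution_exp_moments[OF T B])
    moreover have "(\<Sum>j\<in>I. f j (\<lambda>x. exp (complex_of_real t * vline (complex_of_real (a j)) x))) = 0"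
      using rel[of t] by (simp add: cs_distribution_exp_vline T)
    moreover have "(\<lambda>n. \<Sum>j\<in>I. (complex_of_real t ^ n / fact n) * moment (f j) (complex_of_real (a j)) n) =
        (\<lambda>n. d n / fact n * complex_of_real t ^ n)"
      by (rule ext) (subst sum_distrib_left[symmetric], simp add: d_def field_simps)
    ultimately show ?thesis by simp
  qed
  then have "d n / fact n = 0" by (intro powser_coeffs_eq_zero[of 1]) auto
  then show ?thesis by (simp add: d_def)
qed

lemma cauchy_transforms_sum_eq_zero:
  fixes f :: "nat \<Rightarrow> (real \<Rightarrow> complex) \<Rightarrow> complex" and a :: "nat \<Rightarrow> real"
  assumes fin: "finite I" and T: "\<And>j. j \<in> I \<Longrightarrow> cs_distribution (f j)"
    and B: "\<And>j. j \<in> I \<Longrightarrow> seminorm_bound (f j) C K m"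
    and moments: "\<And>n. (\<Sum>j\<in>I. moment (f j) (complex_of_real (a j)) n) = 0"
    and w: "norm w > (\<Sum>j\<in>I. \<bar>a j\<bar>) + K" "\<And>j. j \<in> I \<Longrightarrow> Re w \<noteq> a j"
  shows "(\<Sum>j\<in>I. cauchy_transform (f j) (w - complex_of_real (a j))) = 0"
proof -
  have "(\<lambda>n. (1 / w^(Suc n)) * moment (f j) (complex_of_real (a j)) n) sums
      cauchy_transform (f j) (w - complex_of_real (a j))" if j: "j \<in> I" for j
  proof -
    have "norm (vline (complex_of_real (a j)) x) \<le> (\<Sum>j\<in>I. \<bar>a j\<bar>) + K" if "x \<in> {-K..K}" for x
      using norm_vline_le_interval[OF that, of "complex_of_real (a j)"]
        member_le_sum[OF j, of "\<lambda>j. \<bar>a j\<bar>"] fin by simp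
    moreover have "vline (complex_of_real (a j)) x \<noteq> w" for x
      using w(2)[OF j] by (auto simp: complex_eq_iff)
    ultimately have "(\<lambda>n. (1 / w^(Suc n)) * moment (f j) (complex_of_real (a j)) n) sums
        f j (\<lambda>x. cauchy_kernel w 0 (vline (complex_of_real (a j)) x))"
      using cs_distribution_cauchy_kernel_moments[OF T[OF j] B[OF j] _ w(1)] by blast
    moreover have "cauchy_kernel w 0 (vline (complex_of_real (a j)) x) =
        cauchy_kernel (w - complex_of_real (a j)) 0 (vline 0 x)" for x
      by (simp add: cauchy_kernel_0 algebra_simps)
    ultimately show ?thesis by (simp add: cauchy_transform_def)
  qed
  then have "(\<lambda>n. \<Sum>j\<in>I. (1 / w^(Suc n)) * moment (f j) (complex_of_real (a j)) n) sums
      (\<Sum>j\<in>I. cauchy_transform (f j) (w - complex_of_real (a j)))"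
    by (rule sums_sum)
  moreover have "(\<lambda>n. \<Sum>j\<in>I. (1 / w^(Suc n)) * moment (f j) (complex_of_real (a j)) n) = (\<lambda>n. 0)"
    by (rule ext) (subst sum_distrib_left[symmetric], simp only: moments mult_zero_right)
  ultimately show ?thesis using sums_zero sums_unique2 by metis
qed

lemma holomorphic_on_cauchy_transform_shifted:
  assumes "cs_distribution T" "seminorm_bound T C K m" "\<delta> \<le> s"
  shows "(\<lambda>w. cauchy_transform T (w + complex_of_real s)) holomorphic_on {w. Re w > -\<delta>}"
proof -
  have "(cauchy_transform T \<circ> (\<lambda>w. w + complex_of_real s)) holomorphic_on {w. Re w > -\<delta>}"
  proof (rule holomorphic_on_compose)
    show "(\<lambda>w. w + complex_of_real s) holomorphic_on {w. Re w > -\<delta>}" by (intro holomorphic_intros)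
    show "cauchy_transform T holomorphic_on (\<lambda>w. w + complex_of_real s) ` {w. Re w > -\<delta>}"
      using assms by (auto intro: holomorphic_on_subset[OF holomorphic_on_cauchy_transform])
  qed
  then show ?thesis by (simp add: o_def)
qed

lemma positive_gap_below_max:
  fixes a :: "'a \<Rightarrow> real"
  assumes fin: "finite I" and lt: "\<And>j. j \<in> I \<Longrightarrow> j \<noteq> jN \<Longrightarrow> a j < a jN"
  obtains \<delta> where "\<delta> > 0" "\<And>j. j \<in> I - {jN} \<Longrightarrow> \<delta> \<le> a jN - a j"
proof (cases "I - {jN} = {}")
  case False
  define \<delta> where "\<delta> = Min ((\<lambda>j. a jN - a j) ` (I - {jN}))"
  have "\<delta> \<in> (\<lambda>j. a jN - a j) ` (I - {jN})" unfolding \<delta>_def using fin False by (intro Min_in) auto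
  then obtain j where "j \<in> I" "j \<noteq> jN" "\<delta> = a jN - a j" by auto
  then have "\<delta> > 0" using lt by simp
  moreover have "\<delta> \<le> a jN - a j" if "j \<in> I - {jN}" for j
    unfolding \<delta>_def using fin that by (intro Min_le) auto
  ultimately show ?thesis using that by blast
qed (use that[of 1] in auto)

lemma dominant_distribution_vanishes:
  fixes f :: "nat \<Rightarrow> (real \<Rightarrow> complex) \<Rightarrow> complex" and a :: "nat \<Rightarrow> real"
  assumes fin: "finite I" and jN: "jN \<in> I"
    and T: "\<And>j. j \<in> I \<Longrightarrow> cs_distribution (f j)"
    and B: "\<And>j. j \<in> I \<Longrightarrow> seminorm_bound (f j) C K m"
    and lt: "\<And>j. j \<in> I \<Longrightarrow> j \<noteq> jN \<Longrightarrow> a j < a jN"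
    and rel: "\<And>t. (\<Sum>j\<in>I. fourier_dist (f j) t * complex_of_real (exp (a j * t))) = 0"
  shows "zero_dist (f jN)"
proof -
  obtain \<delta> where \<delta>: "\<delta> > 0" and \<delta>_le: "\<And>j. j \<in> I - {jN} \<Longrightarrow> \<delta> \<le> a jN - a j"
    using positive_gap_below_max[where a = a, OF fin lt] by blast
  define F where "F = cauchy_transform (f jN)"
  define G where "G w = - (\<Sum>j\<in>I-{jN}. cauchy_transform (f j) (w + complex_of_real (a jN - a j)))" for w
  have "F holomorphic_on {w. Re w \<noteq> 0}"
    unfolding F_def by (rule holomorphic_on_cauchy_transform[OF T[OF jN] B[OF jN]])
  moreover have "G holomorphic_on {w. Re w > -\<delta>}"
    unfolding G_def using \<delta>_le T B
    by (intro holomorphic_intros holomorphic_on_cauchy_transform_shifted) auto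
  moreover have "F w = G w"
    if w: "norm w > (\<Sum>j\<in>I. \<bar>a j\<bar>) + K + \<bar>a jN\<bar>" "-\<delta> < Re w" "Re w \<noteq> 0" for w
  proof -
    define w' where "w' = w + complex_of_real (a jN)"
    have "norm w \<le> norm w' + \<bar>a jN\<bar>"
      using norm_triangle_ineq4[of w' "complex_of_real (a jN)"] by (simp add: w'_def)
    moreover have "Re w' \<noteq> a j" if "j \<in> I" for j
      using that w(2,3) \<delta>_le[of j] by (cases "j = jN") (auto simp: w'_def)
    ultimately have "(\<Sum>j\<in>I. cauchy_transform (f j) (w' - complex_of_real (a j))) = 0"
      using w(1) moments_sum_eq_zero[OF fin T B rel]
      by (intro cauchy_transforms_sum_eq_zero[OF fin T B]) auto
    then show ?thesis
      using fin jN by (simp add: F_def G_def w'_def sum.remove algebra_simps eq_neg_iff_add_eq_0)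
  qed
  moreover have "norm (F w) \<le> C * (\<Sum>k\<le>m. fact k)" if "Re w < 0" "norm w \<ge> K + 1" for w
    unfolding F_def using that by (intro cauchy_transform_bound_far[OF B[OF jN]]) auto
  moreover have "norm (G w) \<le> (\<Sum>j\<in>I-{jN}. C * (\<Sum>k\<le>m. fact k / \<delta>^(Suc k)))" if "Re w \<ge> 0" for w
  proof -
    have "\<delta> \<le> \<bar>Re (w + complex_of_real (a jN - a j))\<bar>" if "j \<in> I - {jN}" for j
      using \<delta>_le[OF that] \<delta> \<open>Re w \<ge> 0\<close> by (simp add: abs_of_nonneg)
    then show ?thesis
      unfolding G_def norm_minus_cancel using \<delta> B
      by (intro order_trans[OF norm_sum] sum_mono cauchy_transform_bound_Re) auto
  qed
  moreover have "((\<lambda>x. F (complex_of_real x)) \<longlongrightarrow> 0) at_top"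
    unfolding F_def by (rule cauchy_transform_tendsto_0[OF B[OF jN]])
  ultimately have "F (complex_of_real x) = 0" if "x > 0" for x
    using glued_function_vanishes[OF \<delta>] that by blast
  then have "moment (f jN) 0 n = 0" for n
    unfolding F_def by (intro moments_eq_zero_if_cauchy_transform_vanishes[OF T[OF jN] B[OF jN]])
  then show ?thesis
    unfolding zero_dist_def
    using cs_distribution_eq_zero_if_moments_eq_zero[OF T[OF jN] B[OF jN]] by blast
qed

lemma distributions_vanish:
  fixes f :: "nat \<Rightarrow> (real \<Rightarrow> complex) \<Rightarrow> complex" and a :: "nat \<Rightarrow> real"
  assumes "finite I" "\<And>j. j \<in> I \<Longrightarrow> cs_distribution (f j)" "inj_on a I"
    and "\<And>t. (\<Sum>j\<in>I. fourier_dist (f j) t * complex_of_real (exp (a j * t))) = 0"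
  shows "\<forall>j\<in>I. zero_dist (f j)"
  using assms
proof (induction I rule: finite_psubset_induct)
  case (psubset I)
  show ?case
  proof (cases "I = {}")
    case False
    have "Max (a ` I) \<in> a ` I" using psubset.hyps False by (intro Max_in) auto
    then obtain jN where jN: "jN \<in> I" "a jN = Max (a ` I)" by auto
    have lt: "a j < a jN" if "j \<in> I" "j \<noteq> jN" for j
      using psubset.hyps psubset.prems(2) jN that
      by (metis Max_ge finite_imageI image_eqI inj_onD order_le_less)
    obtain C K m where B: "\<forall>j\<in>I. seminorm_bound (f j) C K m"
      using seminorm_bound_uniform[OF psubset.hyps(1)] cs_distribution_seminorm_bound psubset.prems(1)
      by metis
    have "zero_dist (f jN)"
      by (rule dominant_distribution_vanishes[where f = f and a = a, OF psubset.hyps(1) jN(1)])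
        (use B psubset.prems lt in auto)
    then have "fourier_dist (f jN) t = 0" for t
      unfolding zero_dist_def fourier_dist_def using smooth_exp_vline[of "complex_of_real t" 0]
      by (simp add: algebra_simps)
    then have "(\<Sum>j\<in>I - {jN}. fourier_dist (f j) t * complex_of_real (exp (a j * t))) = 0" for t
      using psubset.prems(3)[of t] psubset.hyps(1) jN(1) by (simp add: sum.remove)
    then have "\<forall>j\<in>I - {jN}. zero_dist (f j)"
      using psubset.IH[of "I - {jN}"] psubset.prems jN(1) by (auto intro: inj_on_subset)
    with \<open>zero_dist (f jN)\<close> show ?thesis by blast
  qed simp
qed

theorem lemma5p2:
  fixes N :: nat
    and f :: "nat \<Rightarrow> ((real \<Rightarrow> complex) \<Rightarrow> complex)"
    and a :: "nat \<Rightarrow> real"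
  assumes "\<And>j. j \<in> {1..N} \<Longrightarrow> cs_distribution (f j)"
    and "inj_on a {1..N}"
    and "\<And>t. (\<Sum>j=1..N. fourier_dist (f j) t * complex_of_real (exp (a j * t))) = 0"
  shows "\<forall>j\<in>{1..N}. zero_dist (f j)"
  using distributions_vanish[of "{1..N}" f a] assms by blast

end
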